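(* Let $X_1,X_2,\dots$ be i.i.d. $N(\mu,\sigma^2)$ with $\mu\in\mathbb{R}$, $\sigma>0$. For $n\ge2$ let $S_n^2=(n-1)^{-1}\sum_{i=1}^n(X_i-\bar X_n)^2$ with $\bar X_n=n^{-1}\sum_{i=1}^nX_i$. Let $A>0$, $c>0$, $n^*=\sigma\sqrt{A/c}$, fix an integer $k\ge1$ and $0<\rho\le1$, let $m=m_0k+1$ for an integer $m_0\ge1$, and define $$T=\inf\{n\ge 0:\ m+kn\ge \rho S_{m+kn}\sqrt{A/c}\},\qquad N=\lfloor \rho^{-1}(m+kT)\rfloor+1,$$ where $\lfloor u\rfloor$ denotes the largest integer strictly smaller than $u$. Consider the limit operations $m_0\to\infty$, $m\to\infty$, $c=O(m^{-2r})$, $n^*=O(m^r)$ and $\limsup m/n^*<\rho$, with $r>1$ fixed. Then under these limit operations, the family of random variables $(N-n^* )^2/n^*$ is uniformly integrable. *)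

theory Defs
  imports "HOL-Probability.Probability" "HOL-Library.Landau_Symbols"
begin

text \<open>Observations X_1, X_2, ... are represented by X 0, X 1, ... .\<close>

definition sample_mean :: "(nat \<Rightarrow> 'a \<Rightarrow> real) \<Rightarrow> nat \<Rightarrow> 'a \<Rightarrow> real" where
  "sample_mean X n \<omega> = (\<Sum>i<n. X i \<omega>) / real n"

definition sample_var :: "(nat \<Rightarrow> 'a \<Rightarrow> real) \<Rightarrow> nat \<Rightarrow> 'a \<Rightarrow> real" where
  "sample_var X n \<omega> = (\<Sum>i<n. (X i \<omega> - sample_mean X n \<omega>)\<^sup>2) / (real n - 1)"

definition sample_sd :: "(nat \<Rightarrow> 'a \<Rightarrow> real) \<Rightarrow> nat \<Rightarrow> 'a \<Rightarrow> real" where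
  "sample_sd X n \<omega> = sqrt (sample_var X n \<omega>)"

definition strict_floor :: "real \<Rightarrow> int" where
  "strict_floor u = (GREATEST z::int. real_of_int z < u)"

definition stopT :: "(nat \<Rightarrow> 'a \<Rightarrow> real) \<Rightarrow> nat \<Rightarrow> nat \<Rightarrow> real \<Rightarrow> real \<Rightarrow> real \<Rightarrow> 'a \<Rightarrow> nat" where
  "stopT X m k \<rho> A c \<omega> =
     (LEAST n. real (m + k * n) \<ge> \<rho> * sample_sd X (m + k * n) \<omega> * sqrt (A / c))"

definition sampleN :: "(nat \<Rightarrow> 'a \<Rightarrow> real) \<Rightarrow> nat \<Rightarrow> nat \<Rightarrow> real \<Rightarrow> real \<Rightarrow> real \<Rightarrow> 'a \<Rightarrow> int" where
  "sampleN X m k \<rho> A c \<omega> =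
     strict_floor (real (m + k * stopT X m k \<rho> A c \<omega>) / \<rho>) + 1"

end

theory Submission
  imports Defs "HOL-Real_Asymp.Real_Asymp"
begin

(* Write nstar = sigma sqrt (A / c) and Y = (N - nstar)^2 / nstar, so that Y >= l means that N misses
   nstar by at least sqrt (l nstar). Stopping that much too late forces the sum of squared
   deviations from mu at a fixed size near rho (nstar + sqrt (l nstar)) to exceed its mean by the
   factor 1 + sqrt (l / nstar). Stopping that much too early, but after rho nstar / 2, forces the
   sample sum of squares at one of a sequence of sizes below rho nstar to fall short of its mean by a
   relative amount of order sqrt (l / nstar). Chernoff bounds for Gaussian and chi-square sums make
   both events exponentially small in sqrt l, uniformly in the parameters, so the tail
   sum over l >= L of (l + 1) P (Y >= l) is small for large L. A stop before rho nstar / 2 gives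
   Y <= nstar and needs a sample sum of squares at some size >= m below a quarter of its mean, which
   has probability O (exp (- m / 32)); as nstar = O (m^r), this contribution vanishes in the limit. *)

lemma strict_floor_eq_ceiling: "strict_floor u = \<lceil>u\<rceil> - 1"
  unfolding strict_floor_def
  by (rule Greatest_equality) (linarith, simp add: less_ceiling_iff[symmetric])

lemma inverse_sqrt_power_eq_exp:
  assumes "w > 0"
  shows "(1 / sqrt w) ^ n = exp (- real n * ln w / 2)"
proof -
  have "1 / sqrt w = exp (- ln w / 2)"
    using assms by (simp add: powr_half_sqrt[symmetric] powr_def exp_minus field_simps)
  then have "(1 / sqrt w) ^ n = exp (- ln w / 2) ^ n"
    by simp
  also have "\<dots> = exp (real n * (- ln w / 2))"
    by (rule exp_of_nat_mult[symmetric])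
  finally show ?thesis by simp
qed

section \<open>Sums of squares\<close>

definition centered_ssq :: "(nat \<Rightarrow> 'a \<Rightarrow> real) \<Rightarrow> real \<Rightarrow> nat \<Rightarrow> 'a \<Rightarrow> real" where
  "centered_ssq X \<mu> n \<omega> = (\<Sum>i<n. (X i \<omega> - \<mu>)\<^sup>2)"

definition centered_sum :: "(nat \<Rightarrow> 'a \<Rightarrow> real) \<Rightarrow> real \<Rightarrow> nat \<Rightarrow> 'a \<Rightarrow> real" where
  "centered_sum X \<mu> n \<omega> = (\<Sum>i<n. X i \<omega> - \<mu>)"

definition sample_ssq :: "(nat \<Rightarrow> 'a \<Rightarrow> real) \<Rightarrow> nat \<Rightarrow> 'a \<Rightarrow> real" where
  "sample_ssq X n \<omega> = (\<Sum>i<n. (X i \<omega> - sample_mean X n \<omega>)\<^sup>2)"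

lemma sum_squares_shift:
  fixes x :: "nat \<Rightarrow> real"
  assumes n: "n > 0"
  shows "(\<Sum>i<n. (x i - c)\<^sup>2)
    = (\<Sum>i<n. (x i - (\<Sum>j<n. x j) / real n)\<^sup>2) + real n * ((\<Sum>j<n. x j) / real n - c)\<^sup>2"
proof -
  define xb where "xb = (\<Sum>j<n. x j) / real n"
  have centered: "(\<Sum>i<n. x i - xb) = 0"
    using n by (simp add: sum_subtractf xb_def)
  have "(\<Sum>i<n. (x i - c)\<^sup>2) = (\<Sum>i<n. (x i - xb)\<^sup>2 + 2 * (xb - c) * (x i - xb) + (xb - c)\<^sup>2)"
    by (intro sum.cong) (auto simp: power2_eq_square algebra_simps)
  also have "\<dots> = (\<Sum>i<n. (x i - xb)\<^sup>2) + 2 * (xb - c) * (\<Sum>i<n. x i - xb) + real n * (xb - c)\<^sup>2"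
    by (simp add: sum.distrib sum_distrib_left)
  finally show ?thesis
    using centered by (simp add: xb_def)
qed

lemma centered_ssq_eq:
  assumes n: "n > 0"
  shows "centered_ssq X \<mu> n \<omega> = sample_ssq X n \<omega> + (centered_sum X \<mu> n \<omega>)\<^sup>2 / real n"
proof -
  have "centered_sum X \<mu> n \<omega> = real n * ((\<Sum>j<n. X j \<omega>) / real n - \<mu>)"
    using n by (simp add: centered_sum_def sum_subtractf algebra_simps)
  then show ?thesis
    unfolding centered_ssq_def sample_ssq_def sample_mean_def
    using sum_squares_shift[OF n, of "\<lambda>i. X i \<omega>" \<mu>] n by (simp add: power2_eq_square)
qed

lemma sample_ssq_le_centered_ssq: "sample_ssq X n \<omega> \<le> centered_ssq X \<mu> n \<omega>"
proof (cases "n = 0")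
  case True
  then show ?thesis by (simp add: sample_ssq_def centered_ssq_def)
next
  case False
  then show ?thesis using centered_ssq_eq[of n X \<mu> \<omega>] by simp
qed

lemma sample_ssq_le_Suc: "sample_ssq X n \<omega> \<le> sample_ssq X (Suc n) \<omega>"
proof (cases "n = 0")
  case True
  then show ?thesis by (simp add: sample_ssq_def sample_mean_def)
next
  case False
  define c where "c = sample_mean X (Suc n) \<omega>"
  have "sample_ssq X n \<omega> \<le> (\<Sum>i<n. (X i \<omega> - c)\<^sup>2)"
    using sum_squares_shift[of n "\<lambda>i. X i \<omega>" c] False by (simp add: sample_ssq_def sample_mean_def)
  also have "\<dots> \<le> (\<Sum>i<Suc n. (X i \<omega> - c)\<^sup>2)"
    by simp
  also have "\<dots> = sample_ssq X (Suc n) \<omega>"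
    by (simp add: sample_ssq_def c_def)
  finally show ?thesis .
qed

lemma sample_ssq_mono: "n \<le> n' \<Longrightarrow> sample_ssq X n \<omega> \<le> sample_ssq X n' \<omega>"
  by (induction n' rule: dec_induct) (auto intro: order.trans[OF _ sample_ssq_le_Suc])

lemma sample_sd_eq_sqrt: "sample_sd X n \<omega> = sqrt (sample_ssq X n \<omega> / (real n - 1))"
  by (simp add: sample_sd_def sample_var_def sample_ssq_def)

section \<open>Chernoff bounds for Gaussian samples\<close>

lemma nn_integral_normal_density:
  assumes "\<sigma> > 0"
  shows "(\<integral>\<^sup>+x. ennreal (normal_density \<mu> \<sigma> x) \<partial>lborel) = 1"
  using prob_space.emeasure_space_1[OF prob_space_normal_density[OF assms, of \<mu>]]
  by (simp add: emeasure_density)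

lemma normal_density_mult_exp_square:
  assumes s: "\<sigma> > 0" and a: "a < 1/2"
  shows "normal_density \<mu> \<sigma> x * exp (a * (x - \<mu>)\<^sup>2 / \<sigma>\<^sup>2)
       = (1 / sqrt (1 - 2*a)) * normal_density \<mu> (\<sigma> / sqrt (1 - 2*a)) x"
proof -
  have p: "1 - 2*a > 0" using a by simp
  have q: "(\<sigma> / sqrt (1 - 2*a))\<^sup>2 = \<sigma>\<^sup>2 / (1 - 2*a)"
    using p by (simp add: power_divide)
  have "-(x - \<mu>)\<^sup>2 / (2 * \<sigma>\<^sup>2) + a * (x - \<mu>)\<^sup>2 / \<sigma>\<^sup>2 = -(x - \<mu>)\<^sup>2 / (2 * (\<sigma> / sqrt (1 - 2*a))\<^sup>2)"
    unfolding q using p s by (simp add: field_simps)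
  then have e: "exp (-(x - \<mu>)\<^sup>2 / (2 * \<sigma>\<^sup>2)) * exp (a * (x - \<mu>)\<^sup>2 / \<sigma>\<^sup>2)
      = exp (-(x - \<mu>)\<^sup>2 / (2 * (\<sigma> / sqrt (1 - 2*a))\<^sup>2))"
    by (simp only: exp_add[symmetric])
  have c: "1 / sqrt (2 * pi * \<sigma>\<^sup>2)
      = (1 / sqrt (1 - 2*a)) * (1 / sqrt (2 * pi * (\<sigma> / sqrt (1 - 2*a))\<^sup>2))"
    unfolding q using p s by (simp add: real_sqrt_divide real_sqrt_mult field_simps)
  show ?thesis
    unfolding normal_density_def c by (simp only: mult.assoc e)
qed

lemma normal_density_mult_exp_linear:
  assumes s: "\<sigma> > 0"
  shows "normal_density \<mu> \<sigma> x * exp (\<theta> * (x - \<mu>))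
       = exp (\<theta>\<^sup>2 * \<sigma>\<^sup>2 / 2) * normal_density (\<mu> + \<theta> * \<sigma>\<^sup>2) \<sigma> x"
proof -
  have "-(x - \<mu>)\<^sup>2 / (2 * \<sigma>\<^sup>2) + \<theta> * (x - \<mu>)
      = \<theta>\<^sup>2 * \<sigma>\<^sup>2 / 2 + -(x - (\<mu> + \<theta> * \<sigma>\<^sup>2))\<^sup>2 / (2 * \<sigma>\<^sup>2)"
    using s by (simp add: power2_eq_square field_simps)
  then have e: "exp (-(x - \<mu>)\<^sup>2 / (2 * \<sigma>\<^sup>2)) * exp (\<theta> * (x - \<mu>))
      = exp (\<theta>\<^sup>2 * \<sigma>\<^sup>2 / 2) * exp (-(x - (\<mu> + \<theta> * \<sigma>\<^sup>2))\<^sup>2 / (2 * \<sigma>\<^sup>2))"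
    by (simp only: exp_add[symmetric])
  show ?thesis
    unfolding normal_density_def by (simp only: mult.assoc e) (simp only: mult_ac)
qed

lemma emeasure_ge_le_nn_integral_exp:
  assumes f: "f \<in> borel_measurable M"
  shows "emeasure M {\<omega>\<in>space M. t \<le> f \<omega>} \<le> (\<integral>\<^sup>+\<omega>. ennreal (exp (f \<omega> - t)) \<partial>M)"
proof -
  have "emeasure M {\<omega>\<in>space M. t \<le> f \<omega>} = (\<integral>\<^sup>+\<omega>. indicator {\<omega>\<in>space M. t \<le> f \<omega>} \<omega> \<partial>M)"
    using f by (intro nn_integral_indicator[symmetric]) measurable
  also have "\<dots> \<le> (\<integral>\<^sup>+\<omega>. ennreal (exp (f \<omega> - t)) \<partial>M)"
    by (intro nn_integral_mono) (auto simp: indicator_def)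
  finally show ?thesis .
qed

lemma emeasure_UN_le_geometric:
  assumes A: "\<And>i. A i \<in> sets M" and bound: "\<And>i. emeasure M (A i) \<le> ennreal (C * q ^ i)"
    and C: "0 \<le> C" and q: "0 \<le> q" "q < 1"
  shows "emeasure M (\<Union>i. A i) \<le> ennreal (C / (1 - q))"
proof -
  have "emeasure M (\<Union>i. A i) \<le> (\<Sum>i. emeasure M (A i))"
    by (rule emeasure_subadditive_countably) (use A in auto)
  also have "\<dots> \<le> (\<Sum>i. ennreal (C * q ^ i))"
    by (rule suminf_le[OF bound]) (auto intro: summableI)
  also have "\<dots> = ennreal (\<Sum>i. C * q ^ i)"
    using C q by (intro suminf_ennreal2) (auto intro: summable_mult summable_geometric)
  also have "(\<Sum>i. C * q ^ i) = C / (1 - q)"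
    using q by (simp add: suminf_mult summable_geometric suminf_geometric)
  finally show ?thesis .
qed

lemma chi_square_upper_exponent:
  fixes y :: real
  assumes y: "y > 0"
  shows "min y (y\<^sup>2) / 16 \<le> min y 1 / 8 * (1 + y) + ln (1 - 2 * (min y 1 / 8)) / 2"
proof -
  define l where "l = min y 1 / 8"
  have l: "0 < l" "l \<le> 1/8" using y by (auto simp: l_def)
  have ln_ge: "- (2*l) - 2 * (2*l)\<^sup>2 \<le> ln (1 - 2*l)"
    by (rule ln_one_minus_pos_lower_bound) (use l in auto)
  have "min y (y\<^sup>2) / 16 \<le> l * (1 + y) + ln (1 - 2*l) / 2"
  proof (cases "y \<le> 1")
    case True
    then have e: "y = 8 * l" "min y (y\<^sup>2) = y\<^sup>2"
      using y by (auto simp: l_def power2_eq_square mult_le_cancel_left1)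
    have "ln (1 - 2*l) \<ge> -2*l - 8*(l*l)" using ln_ge by (simp add: power2_eq_square)
    moreover have "y\<^sup>2 = 64 * (l*l)" "l * (1 + y) = l + 8 * (l*l)"
      using e by (simp_all add: power2_eq_square algebra_simps)
    ultimately show ?thesis using e by linarith
  next
    case False
    then have e: "l = 1 / 8" "min y (y\<^sup>2) = y" using y by (auto simp: l_def power2_eq_square)
    have "ln (3/4) \<ge> -(3/8::real)" using ln_ge e by (simp add: power2_eq_square)
    moreover have "l * (1 + y) + ln (1 - 2*l) / 2 = (1 + y) / 8 + ln (3/4) / 2"
      unfolding e(1) by simp
    moreover have "y / 16 \<le> (1 + y) / 8 + L / 2" if "L \<ge> -(3/8)" for L :: real
      using False that by argo
    ultimately show ?thesis unfolding e(2) by simp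
  qed
  then show ?thesis by (simp add: l_def)
qed

locale iid_normal = prob_space M for M :: "'a measure" +
  fixes X :: "nat \<Rightarrow> 'a \<Rightarrow> real" and \<mu> \<sigma> :: real
  assumes indep: "indep_vars (\<lambda>_. borel) X UNIV"
    and normal: "\<And>i. distributed M lborel (X i) (normal_density \<mu> \<sigma>)"
    and \<sigma>_pos: "\<sigma> > 0"
begin

lemma measurable_X [measurable]: "X i \<in> borel_measurable M"
  using distributed_measurable[OF normal[of i]] by simp

lemma measurable_sample_ssq [measurable]: "sample_ssq X n \<in> borel_measurable M"
  unfolding sample_ssq_def sample_mean_def by measurable

lemma measurable_centered_ssq [measurable]: "centered_ssq X \<mu> n \<in> borel_measurable M"
  unfolding centered_ssq_def by measurable

lemma measurable_centered_sum [measurable]: "centered_sum X \<mu> n \<in> borel_measurable M"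
  unfolding centered_sum_def by measurable

lemma nn_integral_comp_X:
  assumes g: "g \<in> borel_measurable borel"
  shows "(\<integral>\<^sup>+\<omega>. ennreal (g (X i \<omega>)) \<partial>M) = (\<integral>\<^sup>+x. ennreal (normal_density \<mu> \<sigma> x * g x) \<partial>lborel)"
proof -
  have "(\<integral>\<^sup>+\<omega>. ennreal (g (X i \<omega>)) \<partial>M)
      = (\<integral>\<^sup>+x. ennreal (normal_density \<mu> \<sigma> x) * ennreal (g x) \<partial>lborel)"
    by (rule distributed_nn_integral[OF normal, symmetric]) (use g in simp)
  also have "\<dots> = (\<integral>\<^sup>+x. ennreal (normal_density \<mu> \<sigma> x * g x) \<partial>lborel)"
    by (intro nn_integral_cong) (simp add: ennreal_mult')
  finally show ?thesis .
qed

lemma nn_integral_exp_square_X: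
  assumes a: "a < 1/2"
  shows "(\<integral>\<^sup>+\<omega>. ennreal (exp (a * (X i \<omega> - \<mu>)\<^sup>2 / \<sigma>\<^sup>2)) \<partial>M) = ennreal (1 / sqrt (1 - 2*a))"
proof -
  have p: "1 - 2*a > 0" using a by simp
  have "(\<integral>\<^sup>+\<omega>. ennreal (exp (a * (X i \<omega> - \<mu>)\<^sup>2 / \<sigma>\<^sup>2)) \<partial>M)
      = (\<integral>\<^sup>+x. ennreal (normal_density \<mu> \<sigma> x * exp (a * (x - \<mu>)\<^sup>2 / \<sigma>\<^sup>2)) \<partial>lborel)"
    by (rule nn_integral_comp_X) simp
  also have "\<dots> = (\<integral>\<^sup>+x. ennreal (1 / sqrt (1 - 2*a)) * ennreal (normal_density \<mu> (\<sigma> / sqrt (1 - 2*a)) x) \<partial>lborel)"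
    using p by (intro nn_integral_cong)
      (simp only: normal_density_mult_exp_square[OF \<sigma>_pos a], rule ennreal_mult', simp)
  also have "\<dots> = ennreal (1 / sqrt (1 - 2*a))"
    using p \<sigma>_pos by (simp add: nn_integral_cmult nn_integral_normal_density)
  finally show ?thesis .
qed

lemma nn_integral_exp_linear_X:
  "(\<integral>\<^sup>+\<omega>. ennreal (exp (\<theta> * (X i \<omega> - \<mu>))) \<partial>M) = ennreal (exp (\<theta>\<^sup>2 * \<sigma>\<^sup>2 / 2))"
proof -
  have "(\<integral>\<^sup>+\<omega>. ennreal (exp (\<theta> * (X i \<omega> - \<mu>))) \<partial>M)
      = (\<integral>\<^sup>+x. ennreal (normal_density \<mu> \<sigma> x * exp (\<theta> * (x - \<mu>))) \<partial>lborel)"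
    by (rule nn_integral_comp_X) simp
  also have "\<dots> = (\<integral>\<^sup>+x. ennreal (exp (\<theta>\<^sup>2 * \<sigma>\<^sup>2 / 2)) * ennreal (normal_density (\<mu> + \<theta> * \<sigma>\<^sup>2) \<sigma> x) \<partial>lborel)"
    by (intro nn_integral_cong) (simp add: normal_density_mult_exp_linear[OF \<sigma>_pos] ennreal_mult')
  also have "\<dots> = ennreal (exp (\<theta>\<^sup>2 * \<sigma>\<^sup>2 / 2))"
    using \<sigma>_pos by (simp add: nn_integral_cmult nn_integral_normal_density)
  finally show ?thesis .
qed

lemma chernoff_sum:
  assumes I: "finite I" and g: "g \<in> borel_measurable borel"
    and mgf: "\<And>i. (\<integral>\<^sup>+\<omega>. ennreal (exp (g (X i \<omega>))) \<partial>M) = ennreal C" and C: "C \<ge> 0"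
  shows "emeasure M {\<omega>\<in>space M. t \<le> (\<Sum>i\<in>I. g (X i \<omega>))} \<le> ennreal (exp (-t) * C ^ card I)"
proof -
  have ind: "indep_vars (\<lambda>_. borel) (\<lambda>i \<omega>. ennreal (exp (g (X i \<omega>)))) I"
    by (rule indep_vars_compose2[OF indep_vars_subset[OF indep]]) (use g in auto)
  have "emeasure M {\<omega>\<in>space M. t \<le> (\<Sum>i\<in>I. g (X i \<omega>))}
      \<le> (\<integral>\<^sup>+\<omega>. ennreal (exp ((\<Sum>i\<in>I. g (X i \<omega>)) - t)) \<partial>M)"
    by (rule emeasure_ge_le_nn_integral_exp) (use g in measurable)
  also have "\<dots> = (\<integral>\<^sup>+\<omega>. ennreal (exp (-t)) * (\<Prod>i\<in>I. ennreal (exp (g (X i \<omega>)))) \<partial>M)"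
    using I by (intro nn_integral_cong)
      (simp add: exp_diff exp_minus exp_sum prod_ennreal ennreal_mult'[symmetric] field_simps)
  also have "\<dots> = ennreal (exp (-t)) * (\<Prod>i\<in>I. \<integral>\<^sup>+\<omega>. ennreal (exp (g (X i \<omega>))) \<partial>M)"
    using g by (simp add: nn_integral_cmult indep_vars_nn_integral[OF I ind])
  also have "\<dots> = ennreal (exp (-t) * C ^ card I)"
    using C by (simp add: mgf prod_ennreal ennreal_mult' ennreal_power)
  finally show ?thesis .
qed

lemma centered_ssq_ge_le_exp:
  assumes l: "0 < l" "l < 1/2"
  shows "emeasure M {\<omega>\<in>space M. t \<le> centered_ssq X \<mu> n \<omega>}
    \<le> ennreal (exp (- (l * t / \<sigma>\<^sup>2)) * (1 / sqrt (1 - 2*l)) ^ n)"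
proof -
  have "{\<omega>\<in>space M. t \<le> centered_ssq X \<mu> n \<omega>}
      = {\<omega>\<in>space M. l * t / \<sigma>\<^sup>2 \<le> (\<Sum>i\<in>{..<n}. l * (X i \<omega> - \<mu>)\<^sup>2 / \<sigma>\<^sup>2)}"
    using l \<sigma>_pos
    by (auto simp: centered_ssq_def sum_divide_distrib[symmetric] sum_distrib_left[symmetric]
        divide_le_cancel mult_le_cancel_left_pos)
  also have "emeasure M \<dots> \<le> ennreal (exp (- (l * t / \<sigma>\<^sup>2)) * (1 / sqrt (1 - 2*l)) ^ card {..<n})"
    by (rule chernoff_sum) (use l in \<open>auto simp: nn_integral_exp_square_X\<close>)
  finally show ?thesis by simp
qed

lemma centered_ssq_le_le_exp:
  assumes l: "0 < l"
  shows "emeasure M {\<omega>\<in>space M. centered_ssq X \<mu> n \<omega> \<le> t}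
    \<le> ennreal (exp (l * t / \<sigma>\<^sup>2) * (1 / sqrt (1 + 2*l)) ^ n)"
proof -
  have e: "(\<Sum>i\<in>{..<n}. (-l) * (X i \<omega> - \<mu>)\<^sup>2 / \<sigma>\<^sup>2) = - (l / \<sigma>\<^sup>2 * centered_ssq X \<mu> n \<omega>)" for \<omega>
    by (simp add: centered_ssq_def sum_distrib_left sum_negf[symmetric] sum_divide_distrib)
  have p: "l / \<sigma>\<^sup>2 > 0" using l \<sigma>_pos by simp
  have "{\<omega>\<in>space M. centered_ssq X \<mu> n \<omega> \<le> t}
      = {\<omega>\<in>space M. - (l * t / \<sigma>\<^sup>2) \<le> (\<Sum>i\<in>{..<n}. (-l) * (X i \<omega> - \<mu>)\<^sup>2 / \<sigma>\<^sup>2)}"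
    unfolding e using mult_le_cancel_left_pos[OF p]
    by (auto simp: times_divide_eq_right[symmetric] simp del: times_divide_eq_right)
  also have "emeasure M \<dots> \<le> ennreal (exp (- (- (l * t / \<sigma>\<^sup>2))) * (1 / sqrt (1 - 2*(-l))) ^ card {..<n})"
  proof (rule chernoff_sum)
    show "(\<integral>\<^sup>+\<omega>. ennreal (exp ((-l) * (X i \<omega> - \<mu>)\<^sup>2 / \<sigma>\<^sup>2)) \<partial>M) = ennreal (1 / sqrt (1 - 2*(-l)))" for i
      by (rule nn_integral_exp_square_X) (use l in simp)
  qed (use l in auto)
  finally show ?thesis by simp
qed

lemma centered_sum_ge_le_exp:
  "emeasure M {\<omega>\<in>space M. b \<le> \<theta> * centered_sum X \<mu> n \<omega>} \<le> ennreal (exp (- b) * exp (\<theta>\<^sup>2 * \<sigma>\<^sup>2 / 2) ^ n)"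
proof -
  have "{\<omega>\<in>space M. b \<le> \<theta> * centered_sum X \<mu> n \<omega>} = {\<omega>\<in>space M. b \<le> (\<Sum>i\<in>{..<n}. \<theta> * (X i \<omega> - \<mu>))}"
    by (auto simp: centered_sum_def sum_distrib_left)
  also have "emeasure M \<dots> \<le> ennreal (exp (- b) * exp (\<theta>\<^sup>2 * \<sigma>\<^sup>2 / 2) ^ card {..<n})"
    by (rule chernoff_sum) (auto simp: nn_integral_exp_linear_X)
  finally show ?thesis by simp
qed

lemma centered_ssq_upper_tail:
  assumes y: "y > 0"
  shows "emeasure M {\<omega>\<in>space M. (1 + y) * real n * \<sigma>\<^sup>2 \<le> centered_ssq X \<mu> n \<omega>}
    \<le> ennreal (exp (- (real n * min y (y\<^sup>2) / 16)))"
proof -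
  define l where "l = min y 1 / 8"
  have l: "0 < l" "l < 1/2" using y by (auto simp: l_def)
  then have l_bound: "1 - 2*l > 0" by simp
  have "emeasure M {\<omega>\<in>space M. (1 + y) * real n * \<sigma>\<^sup>2 \<le> centered_ssq X \<mu> n \<omega>}
     \<le> ennreal (exp (- (l * ((1 + y) * real n * \<sigma>\<^sup>2) / \<sigma>\<^sup>2)) * (1 / sqrt (1 - 2*l)) ^ n)"
    by (rule centered_ssq_ge_le_exp[OF l])
  also have "exp (- (l * ((1 + y) * real n * \<sigma>\<^sup>2) / \<sigma>\<^sup>2)) * (1 / sqrt (1 - 2*l)) ^ n
      = exp (- (real n * (l * (1 + y) + ln (1 - 2*l) / 2)))"
    using l unfolding inverse_sqrt_power_eq_exp[of "1 - 2*l", OF l_bound] exp_add[symmetric]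
    by (intro arg_cong[where f=exp]) (use \<sigma>_pos in \<open>simp add: field_simps\<close>)
  also have "\<dots> \<le> exp (- (real n * min y (y\<^sup>2) / 16))"
  proof -
    have "min y (y\<^sup>2) / 16 \<le> l * (1 + y) + ln (1 - 2*l) / 2"
      using chi_square_upper_exponent[OF y] by (simp add: l_def)
    from mult_left_mono[OF this, of "real n"] show ?thesis by (simp add: algebra_simps)
  qed
  finally show ?thesis by (simp add: ennreal_leI)
qed

lemma centered_ssq_lower_tail:
  assumes a: "0 \<le> a" "a < 1"
  shows "emeasure M {\<omega>\<in>space M. centered_ssq X \<mu> n \<omega> \<le> a * real n * \<sigma>\<^sup>2}
    \<le> ennreal (exp (- (real n * (1 - a)\<^sup>2 / 8)))"
proof -
  define l where "l = (1 - a) / 4"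
  have l: "0 < l" "l \<le> 1/4" using a by (auto simp: l_def)
  then have l_bound: "1 + 2*l > 0" by simp
  have ln_ge: "2*l - (2*l)\<^sup>2 \<le> ln (1 + 2*l)"
    by (rule ln_one_plus_pos_lower_bound) (use l in auto)
  have "emeasure M {\<omega>\<in>space M. centered_ssq X \<mu> n \<omega> \<le> a * real n * \<sigma>\<^sup>2}
     \<le> ennreal (exp (l * (a * real n * \<sigma>\<^sup>2) / \<sigma>\<^sup>2) * (1 / sqrt (1 + 2*l)) ^ n)"
    by (rule centered_ssq_le_le_exp[OF l(1)])
  also have "exp (l * (a * real n * \<sigma>\<^sup>2) / \<sigma>\<^sup>2) * (1 / sqrt (1 + 2*l)) ^ n
      = exp (real n * (l * a - ln (1 + 2*l) / 2))"
    using l unfolding inverse_sqrt_power_eq_exp[of "1 + 2*l", OF l_bound] exp_add[symmetric]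
    by (intro arg_cong[where f=exp]) (use \<sigma>_pos in \<open>simp add: field_simps\<close>)
  also have "\<dots> \<le> exp (- (real n * (1 - a)\<^sup>2 / 8))"
  proof -
    have "l * a - ln (1 + 2*l) / 2 \<le> - ((1 - a)\<^sup>2 / 8)"
      using ln_ge unfolding l_def by (simp add: power2_eq_square field_simps)
    from mult_left_mono[OF this, of "real n"] show ?thesis by simp
  qed
  finally show ?thesis by (simp add: ennreal_leI)
qed


lemma centered_sum_abs_tail:
  assumes n: "n > 0" and b: "b > 0"
  shows "emeasure M {\<omega>\<in>space M. b \<le> \<bar>centered_sum X \<mu> n \<omega>\<bar>}
    \<le> ennreal (2 * exp (- (b\<^sup>2 / (2 * real n * \<sigma>\<^sup>2))))"
proof -
  define \<theta> where "\<theta> = b / (real n * \<sigma>\<^sup>2)"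
  have \<theta>: "\<theta> > 0" using n b \<sigma>_pos by (simp add: \<theta>_def)
  have ex: "exp (- (b * \<theta>)) * exp (\<theta>\<^sup>2 * \<sigma>\<^sup>2 / 2) ^ n = exp (- (b\<^sup>2 / (2 * real n * \<sigma>\<^sup>2)))"
    "exp (- (b * \<theta>)) * exp ((-\<theta>)\<^sup>2 * \<sigma>\<^sup>2 / 2) ^ n = exp (- (b\<^sup>2 / (2 * real n * \<sigma>\<^sup>2)))"
    using n \<sigma>_pos
    by (simp_all add: exp_of_nat_mult[symmetric] exp_add[symmetric] \<theta>_def power2_eq_square field_simps)
  have "{\<omega>\<in>space M. b \<le> \<bar>centered_sum X \<mu> n \<omega>\<bar>}
      \<subseteq> {\<omega>\<in>space M. b * \<theta> \<le> \<theta> * centered_sum X \<mu> n \<omega>}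
        \<union> {\<omega>\<in>space M. b * \<theta> \<le> (-\<theta>) * centered_sum X \<mu> n \<omega>}"
  proof safe
    fix \<omega> assume "b \<le> \<bar>centered_sum X \<mu> n \<omega>\<bar>" "\<not> b * \<theta> \<le> (-\<theta>) * centered_sum X \<mu> n \<omega>"
    then show "b * \<theta> \<le> \<theta> * centered_sum X \<mu> n \<omega>"
      using \<theta> mult_right_mono[of b "centered_sum X \<mu> n \<omega>" \<theta>] mult_right_mono[of b "- centered_sum X \<mu> n \<omega>" \<theta>]
      by (cases "centered_sum X \<mu> n \<omega> \<ge> 0") (simp_all add: mult.commute)
  qed
  then have "emeasure M {\<omega>\<in>space M. b \<le> \<bar>centered_sum X \<mu> n \<omega>\<bar>}
      \<le> emeasure M {\<omega>\<in>space M. b * \<theta> \<le> \<theta> * centered_sum X \<mu> n \<omega>}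
        + emeasure M {\<omega>\<in>space M. b * \<theta> \<le> (-\<theta>) * centered_sum X \<mu> n \<omega>}"
    by (intro order.trans[OF emeasure_mono emeasure_subadditive]) measurable
  also have "\<dots> \<le> ennreal (exp (- (b * \<theta>)) * exp (\<theta>\<^sup>2 * \<sigma>\<^sup>2 / 2) ^ n)
      + ennreal (exp (- (b * \<theta>)) * exp ((-\<theta>)\<^sup>2 * \<sigma>\<^sup>2 / 2) ^ n)"
    by (intro add_mono centered_sum_ge_le_exp)
  also have "\<dots> = ennreal (2 * exp (- (b\<^sup>2 / (2 * real n * \<sigma>\<^sup>2))))"
    unfolding ex by (simp add: ennreal_plus[symmetric] del: ennreal_plus)
  finally show ?thesis .
qed

lemma sample_ssq_lower_tail:
  assumes n: "n > 0" and a: "0 \<le> a" and \<delta>: "0 < \<delta>" "a + \<delta> < 1"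
  shows "emeasure M {\<omega>\<in>space M. sample_ssq X n \<omega> \<le> a * real n * \<sigma>\<^sup>2}
     \<le> ennreal (exp (- (real n * (1 - (a + \<delta>))\<^sup>2 / 8)) + 2 * exp (- (real n * \<delta> / 2)))"
proof -
  define b where "b = real n * \<sigma> * sqrt \<delta>"
  have b: "b > 0" using n \<delta> \<sigma>_pos by (simp add: b_def)
  have b2: "b\<^sup>2 = \<delta> * real n * real n * \<sigma>\<^sup>2"
    using \<delta> by (simp add: b_def power_mult_distrib power2_eq_square)
  have "b \<le> \<bar>centered_sum X \<mu> n \<omega>\<bar>"
    if "sample_ssq X n \<omega> \<le> a * real n * \<sigma>\<^sup>2" "\<not> centered_ssq X \<mu> n \<omega> \<le> (a + \<delta>) * real n * \<sigma>\<^sup>2" for \<omega>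
  proof -
    have "(centered_sum X \<mu> n \<omega>)\<^sup>2 / real n > \<delta> * real n * \<sigma>\<^sup>2"
      using centered_ssq_eq[OF n, of X \<mu> \<omega>] that by (simp add: algebra_simps)
    then have "b\<^sup>2 < (centered_sum X \<mu> n \<omega>)\<^sup>2"
      using n unfolding b2 by (simp add: field_simps)
    then have "sqrt (b\<^sup>2) < sqrt ((centered_sum X \<mu> n \<omega>)\<^sup>2)"
      by (rule real_sqrt_less_mono)
    then show ?thesis
      using b by simp
  qed
  then have "{\<omega>\<in>space M. sample_ssq X n \<omega> \<le> a * real n * \<sigma>\<^sup>2}
      \<subseteq> {\<omega>\<in>space M. centered_ssq X \<mu> n \<omega> \<le> (a + \<delta>) * real n * \<sigma>\<^sup>2}
        \<union> {\<omega>\<in>space M. b \<le> \<bar>centered_sum X \<mu> n \<omega>\<bar>}"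
    by blast
  then have "emeasure M {\<omega>\<in>space M. sample_ssq X n \<omega> \<le> a * real n * \<sigma>\<^sup>2}
      \<le> emeasure M {\<omega>\<in>space M. centered_ssq X \<mu> n \<omega> \<le> (a + \<delta>) * real n * \<sigma>\<^sup>2}
        + emeasure M {\<omega>\<in>space M. b \<le> \<bar>centered_sum X \<mu> n \<omega>\<bar>}"
    by (intro order.trans[OF emeasure_mono emeasure_subadditive]) measurable
  also have "\<dots> \<le> ennreal (exp (- (real n * (1 - (a + \<delta>))\<^sup>2 / 8)))
      + ennreal (2 * exp (- (b\<^sup>2 / (2 * real n * \<sigma>\<^sup>2))))"
    using a \<delta> by (intro add_mono centered_ssq_lower_tail centered_sum_abs_tail n b) auto
  also have "b\<^sup>2 / (2 * real n * \<sigma>\<^sup>2) = real n * \<delta> / 2"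
    unfolding b2 using n \<sigma>_pos by (simp add: field_simps)
  finally show ?thesis by (simp add: ennreal_plus[symmetric] del: ennreal_plus)
qed

lemma sample_ssq_lower_tail_gap:
  assumes n: "n > 0" and y: "0 < y" "y \<le> 1/2" and a: "0 \<le> a" "a \<le> 1 - y / 2"
  shows "emeasure M {\<omega>\<in>space M. sample_ssq X n \<omega> \<le> a * real n * \<sigma>\<^sup>2}
     \<le> ennreal (3 * exp (- (real n * y\<^sup>2 / 128)))"
proof -
  have "emeasure M {\<omega>\<in>space M. sample_ssq X n \<omega> \<le> a * real n * \<sigma>\<^sup>2}
      \<le> ennreal (exp (- (real n * (1 - (a + y/4))\<^sup>2 / 8)) + 2 * exp (- (real n * (y/4) / 2)))"
    by (rule sample_ssq_lower_tail) (use n a y in auto)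
  also have "\<dots> \<le> ennreal (3 * exp (- (real n * y\<^sup>2 / 128)))"
  proof (rule ennreal_leI)
    have "(y/4)\<^sup>2 \<le> (1 - (a + y/4))\<^sup>2"
      using a y by (intro power_mono) auto
    then have "real n * y\<^sup>2 / 128 \<le> real n * (1 - (a + y/4))\<^sup>2 / 8"
      using mult_left_mono[of "(y/4)\<^sup>2" "(1 - (a + y/4))\<^sup>2" "real n"] by (simp add: power_divide)
    then have "exp (- (real n * (1 - (a + y/4))\<^sup>2 / 8)) \<le> exp (- (real n * y\<^sup>2 / 128))"
      by simp
    moreover have "y\<^sup>2 \<le> 16 * y"
      using y mult_right_mono[of y 16 y] by (simp add: power2_eq_square)
    then have "real n * y\<^sup>2 \<le> real n * (16 * y)"
      by (rule mult_left_mono) simp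
    then have "exp (- (real n * (y/4) / 2)) \<le> exp (- (real n * y\<^sup>2 / 128))"
      by simp
    ultimately show "exp (- (real n * (1 - (a + y/4))\<^sup>2 / 8)) + 2 * exp (- (real n * (y/4) / 2))
        \<le> 3 * exp (- (real n * y\<^sup>2 / 128))"
      by linarith
  qed
  finally show ?thesis .
qed

end

section \<open>Stopping too early or too late\<close>

definition small_ssq_prob_bound :: "real \<Rightarrow> real" where
  "small_ssq_prob_bound x = 3 * exp (- (x / 32)) / (1 - exp (- (1/32)))"

definition tail_bound :: "real \<Rightarrow> nat \<Rightarrow> real" where
  "tail_bound \<rho> l = exp (- (\<rho> * sqrt (real l) / 16)) + 3 * exp (- (\<rho> * real l / 512)) / (1 - exp (- (\<rho> / 2048)))"

lemma tail_bound_nonneg: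
  assumes "\<rho> > 0"
  shows "0 \<le> tail_bound \<rho> l"
proof -
  have "exp (- (\<rho> / 2048)) < 1" using assms by simp
  then show ?thesis by (simp add: tail_bound_def)
qed

lemma summable_tail_bound:
  assumes \<rho>: "\<rho> > 0"
  shows "summable (\<lambda>l. (real l + 1) * tail_bound \<rho> l)"
proof -
  define C where "C = 3 / (1 - exp (- (\<rho> / 2048)))"
  have C: "C > 0" using \<rho> by (simp add: C_def)
  have "(\<lambda>l. (real l + 1) * (exp (- (\<rho> * sqrt (real l) / 16)) + C * exp (- (\<rho> * real l / 512))))
      \<in> O(\<lambda>l. real l powr (-2))"
    using \<rho> C by real_asymp
  then have "(\<lambda>l. (real l + 1) * tail_bound \<rho> l) \<in> O(\<lambda>l. real l powr (-2))"
    by (simp add: tail_bound_def C_def)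
  then show ?thesis
    by (rule summable_comparison_test_bigo[rotated]) (simp add: summable_real_powr_iff)
qed

lemma one_minus_cube_le:
  fixes x y :: real
  assumes "0 < x" "x \<le> y" "y \<le> 1/2"
  shows "(1 - y)^3 \<le> (1 - y/2) * (1 - y - x/4)"
proof -
  have "(1 - y/2) * (1 - 5*y/4) \<le> (1 - y/2) * (1 - y - x/4)"
    by (rule mult_left_mono) (use assms in auto)
  moreover have "(1 - y/2) * (1 - 5*y/4) - (1 - y)^3 = y * (5/4 - 19*y/8 + y*y)"
    by (simp add: power3_eq_cube field_simps)
  moreover have "y * (5/4 - 19*y/8 + y*y) \<ge> 0"
    using assms by (intro mult_nonneg_nonneg) (auto intro: add_nonneg_nonneg)
  ultimately show ?thesis by linarith
qed

lemma exists_grid_point: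
  fixes x t :: real
  assumes x: "0 < x" "x \<le> t"
  obtains i :: nat where "x * (1 + real i / 4) \<le> t" "t < x * (1 + real i / 4) + x / 4"
proof -
  define z where "z = (t - x) * 4 / x"
  define i where "i = nat \<lfloor>z\<rfloor>"
  have "real i = of_int \<lfloor>z\<rfloor>"
    using x by (simp add: i_def z_def)
  then have "real i \<le> z" "z < real i + 1"
    by linarith+
  then have "x * real i / 4 \<le> t - x" "t - x < x * real i / 4 + x / 4"
    using x by (simp_all add: z_def field_simps)
  then have "x * (1 + real i / 4) \<le> t" "t < x * (1 + real i / 4) + x / 4"
    by (simp_all add: distrib_left)
  then show ?thesis
    by (rule that)
qed

locale stopping_rule = iid_normal M X \<mu> \<sigma> for M :: "'a measure" and X \<mu> \<sigma> +
  fixes m k :: nat and \<rho> A c :: real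
  assumes k_pos: "k \<ge> 1" and m_ge_2: "m \<ge> 2" and \<rho>_pos: "0 < \<rho>"
    and A_pos: "A > 0" and c_pos: "c > 0"
    and large_nstar: "\<sigma> * sqrt (A / c) \<ge> 2"
    and small_m: "real m \<le> \<rho> * (\<sigma> * sqrt (A / c) - 1) - real k"
begin

definition nstar :: real where
  "nstar = \<sigma> * sqrt (A / c)"

definition stops :: "nat \<Rightarrow> 'a \<Rightarrow> bool" where
  "stops n \<omega> \<longleftrightarrow> \<rho> * sample_sd X n \<omega> * sqrt (A / c) \<le> real n"

definition loss :: "'a \<Rightarrow> real" where
  "loss \<omega> = \<bar>(real_of_int (sampleN X m k \<rho> A c \<omega>) - nstar)\<^sup>2 / nstar\<bar>"

lemma nstar_ge_2: "2 \<le> nstar"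
  using large_nstar by (simp add: nstar_def)

lemma nstar_pos: "0 < nstar"
  using nstar_ge_2 by simp

lemma stops_iff:
  assumes n: "n \<ge> 2"
  shows "stops n \<omega> \<longleftrightarrow> sample_ssq X n \<omega> * (\<rho> * nstar)\<^sup>2 \<le> (real n)\<^sup>2 * (real n - 1) * \<sigma>\<^sup>2"
proof -
  define z where "z = \<rho>\<^sup>2 * (sample_ssq X n \<omega> / (real n - 1)) * (A / c)"
  have n1: "real n - 1 > 0" using n by simp
  have "sqrt z = \<rho> * sample_sd X n \<omega> * sqrt (A / c)"
    using \<rho>_pos by (simp only: z_def real_sqrt_mult real_sqrt_abs sample_sd_eq_sqrt)
  then have "stops n \<omega> \<longleftrightarrow> sqrt z \<le> sqrt ((real n)\<^sup>2)"
    by (simp add: stops_def)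
  also have "\<dots> \<longleftrightarrow> z \<le> (real n)\<^sup>2"
    by (rule real_sqrt_le_iff)
  also have "\<dots> \<longleftrightarrow> z * ((real n - 1) * \<sigma>\<^sup>2) \<le> (real n)\<^sup>2 * ((real n - 1) * \<sigma>\<^sup>2)"
    using n1 \<sigma>_pos by simp
  also have "z * ((real n - 1) * \<sigma>\<^sup>2) = sample_ssq X n \<omega> * (\<rho> * nstar)\<^sup>2"
    using n1 A_pos c_pos by (simp add: z_def nstar_def power_mult_distrib)
  finally show ?thesis by (simp add: mult_ac)
qed

lemma stops_imp_sample_ssq_le:
  assumes n: "n \<ge> 2" and stop: "stops n \<omega>"
  shows "sample_ssq X n \<omega> \<le> real n * \<sigma>\<^sup>2 * (real n / (\<rho> * nstar))\<^sup>2"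
proof -
  have "sample_ssq X n \<omega> * (\<rho> * nstar)\<^sup>2 \<le> (real n)\<^sup>2 * (real n - 1) * \<sigma>\<^sup>2"
    using stops_iff[OF n] stop by simp
  also have "\<dots> \<le> (real n)\<^sup>2 * real n * \<sigma>\<^sup>2"
    by (intro mult_right_mono mult_left_mono) auto
  finally show ?thesis
    using \<rho>_pos nstar_pos by (simp add: field_simps power2_eq_square)
qed

lemma not_stops_imp_centered_ssq_gt:
  assumes n: "n \<ge> 2" and "\<not> stops n \<omega>"
  shows "(real n)\<^sup>2 * (real n - 1) * \<sigma>\<^sup>2 < centered_ssq X \<mu> n \<omega> * (\<rho> * nstar)\<^sup>2"
proof -
  have "sample_ssq X n \<omega> * (\<rho> * nstar)\<^sup>2 \<le> centered_ssq X \<mu> n \<omega> * (\<rho> * nstar)\<^sup>2"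
    by (intro mult_right_mono sample_ssq_le_centered_ssq) simp
  moreover have "\<not> sample_ssq X n \<omega> * (\<rho> * nstar)\<^sup>2 \<le> (real n)\<^sup>2 * (real n - 1) * \<sigma>\<^sup>2"
    using stops_iff[OF n, of \<omega>] assms(2) by simp
  ultimately show ?thesis
    by linarith
qed

definition small_ssq_event :: "'a set" where
  "small_ssq_event = (\<Union>i. {\<omega>\<in>space M. sample_ssq X (m + i) \<omega> \<le> 1/4 * real (m + i) * \<sigma>\<^sup>2})"

lemma small_ssq_event_sets [measurable]: "small_ssq_event \<in> sets M"
  unfolding small_ssq_event_def by measurable

lemma emeasure_small_ssq_event_le: "emeasure M small_ssq_event \<le> ennreal (small_ssq_prob_bound m)"
  unfolding small_ssq_event_def small_ssq_prob_bound_def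
proof (rule emeasure_UN_le_geometric)
  fix i
  have "emeasure M {\<omega>\<in>space M. sample_ssq X (m + i) \<omega> \<le> 1/4 * real (m + i) * \<sigma>\<^sup>2}
     \<le> ennreal (exp (- (real (m + i) * (1 - (1/4 + 1/4))\<^sup>2 / 8)) + 2 * exp (- (real (m + i) * (1/4) / 2)))"
    by (rule sample_ssq_lower_tail) (use m_ge_2 in auto)
  also have "\<dots> \<le> ennreal (3 * exp (- (real m / 32)) * exp (- (1/32)) ^ i)"
  proof (rule ennreal_leI)
    have "exp (- (real (m + i) * (1/4) / 2)) \<le> exp (- (real (m + i) * (1 - (1/4 + 1/4))\<^sup>2 / 8))"
      by (simp add: power2_eq_square)
    moreover have "exp (- (real (m + i) * (1 - (1/4 + 1/4))\<^sup>2 / 8)) = exp (- (real m / 32)) * exp (- (1/32)) ^ i"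
      by (simp add: exp_of_nat_mult[symmetric] exp_add[symmetric] power2_eq_square field_simps)
    ultimately show "exp (- (real (m + i) * (1 - (1/4 + 1/4))\<^sup>2 / 8)) + 2 * exp (- (real (m + i) * (1/4) / 2))
        \<le> 3 * exp (- (real m / 32)) * exp (- (1/32)) ^ i"
      by linarith
  qed
  finally show "emeasure M {\<omega>\<in>space M. sample_ssq X (m + i) \<omega> \<le> 1/4 * real (m + i) * \<sigma>\<^sup>2}
     \<le> ennreal (3 * exp (- (real m / 32)) * exp (- (1/32)) ^ i)" .
qed auto

lemma early_stop_imp_small_ssq_event:
  assumes \<omega>: "\<omega> \<in> space M" and stop: "stops n \<omega>" and n: "m \<le> n" "real n \<le> \<rho> * nstar / 2"
  shows "\<omega> \<in> small_ssq_event"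
proof -
  have pos: "0 < \<rho> * nstar" using \<rho>_pos nstar_pos by simp
  have "sample_ssq X n \<omega> \<le> real n * \<sigma>\<^sup>2 * (real n / (\<rho> * nstar))\<^sup>2"
    using m_ge_2 n(1) by (intro stops_imp_sample_ssq_le stop) auto
  also have "\<dots> \<le> real n * \<sigma>\<^sup>2 * (1/2)\<^sup>2"
    by (intro mult_left_mono power_mono) (use pos n(2) in \<open>auto simp: divide_le_eq\<close>)
  finally have "sample_ssq X (m + (n - m)) \<omega> \<le> 1/4 * real (m + (n - m)) * \<sigma>\<^sup>2"
    using n(1) by (simp add: power2_eq_square)
  then show ?thesis
    using \<omega> unfolding small_ssq_event_def by blast
qed

definition rel_dev :: "nat \<Rightarrow> real" where
  "rel_dev l = sqrt (real l / nstar)"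

definition abs_dev :: "nat \<Rightarrow> real" where
  "abs_dev l = sqrt (real l * nstar)"

lemma rel_dev_pos: "l \<ge> 1 \<Longrightarrow> 0 < rel_dev l"
  using nstar_pos by (simp add: rel_dev_def)

lemma abs_dev_eq: "abs_dev l = nstar * rel_dev l"
  using nstar_pos by (simp add: abs_dev_def rel_dev_def real_sqrt_divide real_sqrt_mult field_simps)

lemma abs_dev_ge: "sqrt (real l) \<le> abs_dev l"
  using nstar_ge_2 by (simp add: abs_dev_def mult_le_cancel_left1)

lemma abs_dev_le_iff: "abs_dev l \<le> \<bar>t - nstar\<bar> \<longleftrightarrow> real l \<le> (t - nstar)\<^sup>2 / nstar"
proof -
  have "abs_dev l \<le> \<bar>t - nstar\<bar> \<longleftrightarrow> sqrt (real l * nstar) \<le> sqrt ((t - nstar)\<^sup>2)"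
    by (simp add: abs_dev_def)
  also have "\<dots> \<longleftrightarrow> real l * nstar \<le> (t - nstar)\<^sup>2"
    by (rule real_sqrt_le_iff)
  also have "\<dots> \<longleftrightarrow> real l \<le> (t - nstar)\<^sup>2 / nstar"
    using nstar_pos by (simp add: le_divide_eq)
  finally show ?thesis .
qed

text \<open>An early stop at a size n with \<rho> nstar / 2 < n \<le> \<rho> (nstar - abs_dev l) is caught by
  a block whose size lies below n and whose level is at most the relative shortfall
  1 - n / (\<rho> nstar); the levels grow linearly in i, which makes the block probabilities
  decay geometrically.\<close>

definition block_level :: "nat \<Rightarrow> nat \<Rightarrow> real" where
  "block_level l i = rel_dev l * (1 + real i / 4)"

definition block_size :: "nat \<Rightarrow> nat \<Rightarrow> nat" where
  "block_size l i = nat \<lceil>\<rho> * nstar * (1 - block_level l i - rel_dev l / 4)\<rceil>"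

definition block_ratio :: "nat \<Rightarrow> nat \<Rightarrow> real" where
  "block_ratio l i = \<rho> * nstar * (1 - block_level l i)^3 / real (block_size l i)"

definition undershoot_block :: "nat \<Rightarrow> nat \<Rightarrow> 'a set" where
  "undershoot_block l i = {\<omega>\<in>space M. block_level l i \<le> 1/2
     \<and> sample_ssq X (block_size l i) \<omega> \<le> block_ratio l i * real (block_size l i) * \<sigma>\<^sup>2}"

definition undershoot_event :: "nat \<Rightarrow> 'a set" where
  "undershoot_event l = (\<Union>i. undershoot_block l i)"

lemma undershoot_block_sets [measurable]: "undershoot_block l i \<in> sets M"
  unfolding undershoot_block_def by measurable

lemma undershoot_event_sets [measurable]: "undershoot_event l \<in> sets M"
  unfolding undershoot_event_def by measurable

lemma rel_dev_le_block_level: "l \<ge> 1 \<Longrightarrow> rel_dev l \<le> block_level l i"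
  using rel_dev_pos[of l] by (simp add: block_level_def)

lemma block_size_ge:
  assumes l: "l \<ge> 1" and level: "block_level l i \<le> 1/2"
  shows "\<rho> * nstar * (1 - block_level l i - rel_dev l / 4) \<le> real (block_size l i)"
    and "\<rho> * nstar / 4 \<le> real (block_size l i)"
proof -
  show ge: "\<rho> * nstar * (1 - block_level l i - rel_dev l / 4) \<le> real (block_size l i)"
    unfolding block_size_def by (simp add: real_nat_ceiling_ge)
  have "1/4 \<le> 1 - block_level l i - rel_dev l / 4"
    using rel_dev_le_block_level[OF l, of i] level by linarith
  then have "\<rho> * nstar * (1/4) \<le> \<rho> * nstar * (1 - block_level l i - rel_dev l / 4)"
    using \<rho>_pos nstar_pos by (intro mult_left_mono) auto
  then show "\<rho> * nstar / 4 \<le> real (block_size l i)"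
    using ge by simp
qed

lemma block_size_pos:
  assumes "l \<ge> 1" "block_level l i \<le> 1/2"
  shows "0 < block_size l i"
proof -
  have "0 < \<rho> * nstar / 4" using \<rho>_pos nstar_pos by simp
  then have "0 < real (block_size l i)" using block_size_ge(2)[OF assms] by linarith
  then show ?thesis by simp
qed

lemma block_ratio_bounds:
  assumes l: "l \<ge> 1" and level: "block_level l i \<le> 1/2"
  shows "0 \<le> block_ratio l i" and "block_ratio l i \<le> 1 - block_level l i / 2"
proof -
  define y where "y = block_level l i"
  define x where "x = rel_dev l"
  have pos: "\<rho> * nstar > 0" using \<rho>_pos nstar_pos by simp
  have y: "y \<le> 1/2" "x \<le> y" "0 < x"
    using level rel_dev_le_block_level[OF l] rel_dev_pos[OF l] by (simp_all add: x_def y_def)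
  have low: "1 - y - x / 4 \<ge> 1/4" using y by linarith
  have size: "\<rho> * nstar * (1 - y - x / 4) \<le> real (block_size l i)"
    using block_size_ge(1)[OF l level] by (simp add: x_def y_def)
  show "0 \<le> block_ratio l i"
    unfolding block_ratio_def y_def[symmetric] using \<rho>_pos nstar_pos y
    by (intro divide_nonneg_nonneg mult_nonneg_nonneg) auto
  have "block_ratio l i \<le> \<rho> * nstar * (1 - y)^3 / (\<rho> * nstar * (1 - y - x / 4))"
    unfolding block_ratio_def y_def[symmetric]
    by (rule divide_left_mono[OF size]) (use pos y low block_size_pos[OF l level] in \<open>auto intro!: mult_pos_pos\<close>)
  also have "\<dots> = (1 - y)^3 / (1 - y - x / 4)"
    using \<rho>_pos nstar_pos by simp
  also have "\<dots> \<le> 1 - y / 2"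
    using one_minus_cube_le[of x y] y low by (simp add: divide_le_eq)
  finally show "block_ratio l i \<le> 1 - block_level l i / 2"
    by (simp add: y_def)
qed

lemma emeasure_undershoot_block_le:
  assumes l: "l \<ge> 1"
  shows "emeasure M (undershoot_block l i)
    \<le> ennreal (3 * exp (- (\<rho> * real l / 512)) * exp (- (\<rho> * real l / 2048)) ^ i)"
proof (cases "block_level l i \<le> 1/2")
  case False
  then show ?thesis by (simp add: undershoot_block_def)
next
  case True
  define y where "y = block_level l i"
  define n where "n = block_size l i"
  define a where "a = block_ratio l i"
  have y: "0 < y" "y \<le> 1/2"
    using True rel_dev_pos[OF l] rel_dev_le_block_level[OF l, of i] by (simp_all add: y_def)
  have n: "0 < n" "\<rho> * nstar / 4 \<le> real n"
    using block_size_pos[OF l True] block_size_ge(2)[OF l True] by (simp_all add: n_def)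
  have a: "0 \<le> a" "a \<le> 1 - y / 2"
    using block_ratio_bounds[OF l True] by (simp_all add: a_def y_def)
  have "emeasure M (undershoot_block l i) \<le> emeasure M {\<omega>\<in>space M. sample_ssq X n \<omega> \<le> a * real n * \<sigma>\<^sup>2}"
    by (rule emeasure_mono) (auto simp: undershoot_block_def n_def a_def)
  also have "\<dots> \<le> ennreal (3 * exp (- (real n * y\<^sup>2 / 128)))"
    by (rule sample_ssq_lower_tail_gap) (use n a y in auto)
  also have "\<dots> \<le> ennreal (3 * exp (- (\<rho> * real l / 512)) * exp (- (\<rho> * real l / 2048)) ^ i)"
  proof (rule ennreal_leI)
    define q where "q = 1 + real i / 4"
    have q: "1 \<le> q" by (simp add: q_def)
    have "nstar * y\<^sup>2 = real l * q\<^sup>2"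
      using nstar_pos by (simp add: y_def block_level_def q_def rel_dev_def power_mult_distrib)
    then have "\<rho> * real l * q \<le> \<rho> * nstar * y\<^sup>2"
      using q \<rho>_pos mult_left_mono[of q "q * q" "\<rho> * real l"] by (simp add: power2_eq_square)
    also have "\<dots> \<le> 4 * real n * y\<^sup>2"
      using n(2) by (intro mult_right_mono) auto
    finally have "\<rho> * real l * q / 512 \<le> real n * y\<^sup>2 / 128"
      by (simp add: mult_ac)
    moreover have "exp (- (\<rho> * real l / 512)) * exp (- (\<rho> * real l / 2048)) ^ i = exp (- (\<rho> * real l * q / 512))"
      by (simp add: exp_of_nat_mult[symmetric] exp_add[symmetric] q_def field_simps)
    ultimately show "3 * exp (- (real n * y\<^sup>2 / 128)) \<le> 3 * exp (- (\<rho> * real l / 512)) * exp (- (\<rho> * real l / 2048)) ^ i"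
      by (simp add: mult.assoc)
  qed
  finally show ?thesis .
qed

lemma emeasure_undershoot_event_le:
  assumes l: "l \<ge> 1"
  shows "emeasure M (undershoot_event l) \<le> ennreal (3 * exp (- (\<rho> * real l / 512)) / (1 - exp (- (\<rho> / 2048))))"
proof -
  have q: "0 \<le> exp (- (\<rho> * real l / 2048))" "exp (- (\<rho> * real l / 2048)) < 1"
    using \<rho>_pos l by auto
  have "emeasure M (undershoot_event l) \<le> ennreal (3 * exp (- (\<rho> * real l / 512)) / (1 - exp (- (\<rho> * real l / 2048))))"
    unfolding undershoot_event_def
    by (rule emeasure_UN_le_geometric[OF _ emeasure_undershoot_block_le[OF l]]) (use q in auto)
  also have "\<dots> \<le> ennreal (3 * exp (- (\<rho> * real l / 512)) / (1 - exp (- (\<rho> / 2048))))"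
  proof (intro ennreal_leI divide_left_mono)
    have "\<rho> / 2048 \<le> \<rho> * real l / 2048"
      using \<rho>_pos l by (simp add: mult_le_cancel_left1)
    then show "1 - exp (- (\<rho> / 2048)) \<le> 1 - exp (- (\<rho> * real l / 2048))"
      by simp
    show "0 < (1 - exp (- (\<rho> * real l / 2048))) * (1 - exp (- (\<rho> / 2048)))"
      using \<rho>_pos q by simp
  qed simp
  finally show ?thesis .
qed

text \<open>A late stop means that the rule did not stop at the last stage whose size is at most
  \<rho> (nstar + abs_dev l - 1) - k.\<close>

definition overshoot_stage :: "nat \<Rightarrow> nat" where
  "overshoot_stage l = nat \<lfloor>(\<rho> * (nstar + abs_dev l - 1) - real k - real m) / real k\<rfloor>"

definition overshoot_size :: "nat \<Rightarrow> nat" where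
  "overshoot_size l = m + k * overshoot_stage l"

definition overshoot_event :: "nat \<Rightarrow> 'a set" where
  "overshoot_event l = {\<omega>\<in>space M.
     (1 + rel_dev l) * real (overshoot_size l) * \<sigma>\<^sup>2 \<le> centered_ssq X \<mu> (overshoot_size l) \<omega>}"

lemma overshoot_event_sets [measurable]: "overshoot_event l \<in> sets M"
  unfolding overshoot_event_def by measurable

lemma overshoot_size_bounds:
  "real (overshoot_size l) \<le> \<rho> * (nstar + abs_dev l - 1) - real k"
  "\<rho> * (nstar + abs_dev l - 1) - 2 * real k < real (overshoot_size l)"
proof -
  define z where "z = (\<rho> * (nstar + abs_dev l - 1) - real k - real m) / real k"
  have k: "real k > 0" using k_pos by simp
  have "\<rho> * (nstar - 1) \<le> \<rho> * (nstar + abs_dev l - 1)"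
    using \<rho>_pos by (simp add: abs_dev_def nstar_pos less_imp_le)
  then have "z \<ge> 0"
    using small_m k unfolding z_def nstar_def by simp
  then have stage: "real (overshoot_stage l) = of_int \<lfloor>z\<rfloor>"
    by (simp add: overshoot_stage_def z_def[symmetric])
  have "real k * of_int \<lfloor>z\<rfloor> \<le> real k * z" "real k * z < real k * (of_int \<lfloor>z\<rfloor> + 1)"
    using k by simp_all
  moreover have "real k * z = \<rho> * (nstar + abs_dev l - 1) - real k - real m"
    using k by (simp add: z_def)
  ultimately show "real (overshoot_size l) \<le> \<rho> * (nstar + abs_dev l - 1) - real k"
    "\<rho> * (nstar + abs_dev l - 1) - 2 * real k < real (overshoot_size l)"
    by (simp_all add: overshoot_size_def stage algebra_simps)
qed

lemma overshoot_stage_less: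
  assumes "\<rho> * (nstar + abs_dev l - 1) < real (m + k * t)"
  shows "overshoot_stage l < t"
proof -
  have "real (m + k * overshoot_stage l + k) < real (m + k * t)"
    using overshoot_size_bounds(1)[of l] assms by (simp add: overshoot_size_def)
  then have "k * overshoot_stage l < k * t"
    by (simp only: of_nat_less_iff)
  then show ?thesis
    by simp
qed

lemma overshoot_size_ge:
  assumes K: "2 + (4 * real k + 2) / \<rho> \<le> sqrt (real l)"
  shows "\<rho> * nstar + \<rho> * abs_dev l / 2 \<le> real (overshoot_size l) - 1"
proof -
  have "2 + (4 * real k + 2) / \<rho> \<le> abs_dev l"
    using K abs_dev_ge[of l] by linarith
  then have "\<rho> * (2 + (4 * real k + 2) / \<rho>) \<le> \<rho> * abs_dev l"
    using \<rho>_pos by (simp add: mult_left_mono)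
  moreover have "\<rho> * (2 + (4 * real k + 2) / \<rho>) = 2 * \<rho> + 4 * real k + 2"
    using \<rho>_pos by (simp add: field_simps)
  ultimately show ?thesis
    using overshoot_size_bounds(2)[of l] by (simp add: algebra_simps)
qed

lemma overshoot_size_sq_ge:
  assumes K: "2 + (4 * real k + 2) / \<rho> \<le> sqrt (real l)"
  shows "(1 + rel_dev l) * (\<rho> * nstar)\<^sup>2 \<le> real (overshoot_size l) * (real (overshoot_size l) - 1)"
proof -
  define s where "s = real (overshoot_size l)"
  define x where "x = rel_dev l"
  have x: "x \<ge> 0" by (simp add: x_def rel_dev_def nstar_pos less_imp_le)
  have lower: "\<rho> * nstar * (1 + x / 2) \<le> s - 1"
    using overshoot_size_ge[OF K] abs_dev_eq[of l] by (simp add: s_def x_def algebra_simps)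
  have nonneg: "0 \<le> \<rho> * nstar * (1 + x / 2)"
    using \<rho>_pos nstar_pos x by simp
  have "(1 + x) * (\<rho> * nstar)\<^sup>2 \<le> (\<rho> * nstar * (1 + x / 2))\<^sup>2"
    using \<rho>_pos nstar_pos x by (simp add: power2_eq_square algebra_simps)
  also have "\<dots> \<le> (s - 1)\<^sup>2"
    by (rule power_mono[OF lower nonneg])
  also have "\<dots> \<le> s * (s - 1)"
    using lower nonneg by (simp add: power2_eq_square mult_right_mono)
  finally show ?thesis by (simp add: s_def x_def)
qed

lemma not_stops_imp_overshoot_event:
  assumes K: "2 + (4 * real k + 2) / \<rho> \<le> sqrt (real l)" and \<omega>: "\<omega> \<in> space M"
    and not_stop: "\<not> stops (overshoot_size l) \<omega>"
  shows "\<omega> \<in> overshoot_event l"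
proof -
  define s where "s = overshoot_size l"
  have s: "s \<ge> 2" using m_ge_2 by (simp add: s_def overshoot_size_def)
  have pos: "(\<rho> * nstar)\<^sup>2 > 0" using \<rho>_pos nstar_pos by simp
  have "(1 + rel_dev l) * real s * \<sigma>\<^sup>2 * (\<rho> * nstar)\<^sup>2 = ((1 + rel_dev l) * (\<rho> * nstar)\<^sup>2) * (real s * \<sigma>\<^sup>2)"
    by (simp add: mult_ac)
  also have "\<dots> \<le> (real s * (real s - 1)) * (real s * \<sigma>\<^sup>2)"
    using overshoot_size_sq_ge[OF K] by (intro mult_right_mono) (simp_all add: s_def)
  also have "\<dots> = (real s)\<^sup>2 * (real s - 1) * \<sigma>\<^sup>2"
    by (simp add: power2_eq_square mult_ac)
  also have "\<dots> < centered_ssq X \<mu> s \<omega> * (\<rho> * nstar)\<^sup>2"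
    using not_stops_imp_centered_ssq_gt[OF s] not_stop by (simp add: s_def)
  finally have "(1 + rel_dev l) * real s * \<sigma>\<^sup>2 \<le> centered_ssq X \<mu> s \<omega>"
    using pos by simp
  then show ?thesis
    using \<omega> by (simp add: overshoot_event_def s_def)
qed

lemma emeasure_overshoot_event_le:
  assumes l: "l \<ge> 1" and K: "2 + (4 * real k + 2) / \<rho> \<le> sqrt (real l)"
  shows "emeasure M (overshoot_event l) \<le> ennreal (exp (- (\<rho> * sqrt (real l) / 16)))"
proof -
  define x where "x = rel_dev l"
  have x: "x > 0" using rel_dev_pos[OF l] by (simp add: x_def)
  have "emeasure M (overshoot_event l) \<le> ennreal (exp (- (real (overshoot_size l) * min x (x\<^sup>2) / 16)))"
    unfolding overshoot_event_def x_def by (rule centered_ssq_upper_tail[OF x[unfolded x_def]])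
  also have "\<dots> \<le> ennreal (exp (- (\<rho> * sqrt (real l) / 16)))"
  proof (rule ennreal_leI)
    have "sqrt (real l) \<le> real l"
      using l by (simp add: real_sqrt_le_iff' power2_eq_square)
    moreover have "nstar * x\<^sup>2 = real l"
      using nstar_pos by (simp add: x_def rel_dev_def)
    moreover have "sqrt (real l) \<le> nstar * x"
      using abs_dev_ge[of l] abs_dev_eq[of l] by (simp add: x_def)
    ultimately have "sqrt (real l) \<le> nstar * min x (x\<^sup>2)"
      by (simp add: min_def)
    then have "\<rho> * sqrt (real l) \<le> (\<rho> * nstar) * min x (x\<^sup>2)"
      using \<rho>_pos by (simp add: mult_left_mono mult.assoc)
    also have "\<dots> \<le> real (overshoot_size l) * min x (x\<^sup>2)"
    proof (rule mult_right_mono)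
      have "0 \<le> \<rho> * abs_dev l / 2"
        using \<rho>_pos by (simp add: abs_dev_def nstar_pos less_imp_le)
      then show "\<rho> * nstar \<le> real (overshoot_size l)"
        using overshoot_size_ge[OF K] by linarith
    qed (use x in simp)
    finally show "exp (- (real (overshoot_size l) * min x (x\<^sup>2) / 16)) \<le> exp (- (\<rho> * sqrt (real l) / 16))"
      by simp
  qed
  finally show ?thesis .
qed

lemma emeasure_overshoot_undershoot_le:
  assumes l: "l \<ge> 1" and K: "2 + (4 * real k + 2) / \<rho> \<le> sqrt (real l)"
  shows "emeasure M (overshoot_event l \<union> undershoot_event l) \<le> ennreal (tail_bound \<rho> l)"
proof -
  have "emeasure M (overshoot_event l \<union> undershoot_event l) \<le> emeasure M (overshoot_event l) + emeasure M (undershoot_event l)"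
    by (rule emeasure_subadditive) measurable
  also have "\<dots> \<le> ennreal (exp (- (\<rho> * sqrt (real l) / 16)))
      + ennreal (3 * exp (- (\<rho> * real l / 512)) / (1 - exp (- (\<rho> / 2048))))"
    by (intro add_mono emeasure_overshoot_event_le[OF l K] emeasure_undershoot_event_le[OF l])
  also have "\<dots> = ennreal (tail_bound \<rho> l)"
    unfolding tail_bound_def using \<rho>_pos by (subst ennreal_plus) auto
  finally show ?thesis .
qed

lemma stopT_eq_Least: "stopT X m k \<rho> A c \<omega> = (LEAST t. stops (m + k * t) \<omega>)"
  by (simp add: stopT_def stops_def)

lemma sampleN_eq_ceiling:
  "real_of_int (sampleN X m k \<rho> A c \<omega>) = of_int \<lceil>real (m + k * stopT X m k \<rho> A c \<omega>) / \<rho>\<rceil>"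
  by (simp add: sampleN_def strict_floor_eq_ceiling)

lemma early_stop_imp_undershoot_event:
  assumes \<omega>: "\<omega> \<in> space M" and l: "l \<ge> 1" and stop: "stops n \<omega>" and n: "m \<le> n"
    and lower: "\<rho> * nstar / 2 < real n" and upper: "real n \<le> \<rho> * (nstar - abs_dev l)"
  shows "\<omega> \<in> undershoot_event l"
proof -
  have pos: "0 < \<rho> * nstar" using \<rho>_pos nstar_pos by simp
  define w where "w = real n / (\<rho> * nstar)"
  have n_eq: "real n = \<rho> * nstar * w"
    using \<rho>_pos nstar_pos by (simp add: w_def)
  have w: "1/2 < w" "w \<le> 1 - rel_dev l"
    using lower upper abs_dev_eq[of l]
    unfolding w_def pos_less_divide_eq[OF pos] pos_divide_le_eq[OF pos] by (simp_all add: algebra_simps)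
  obtain i where i: "block_level l i \<le> 1 - w" "1 - w < block_level l i + rel_dev l / 4"
    using exists_grid_point[OF rel_dev_pos[OF l], of "1 - w"] w(2) unfolding block_level_def by auto
  have level: "block_level l i \<le> 1/2"
    using i(1) w(1) by linarith
  have "\<rho> * nstar * (1 - block_level l i - rel_dev l / 4) \<le> real n"
    unfolding n_eq using i(2) pos by (intro mult_left_mono) auto
  then have size: "block_size l i \<le> n"
    unfolding block_size_def by (simp add: ceiling_le_iff nat_le_iff)
  have "sample_ssq X (block_size l i) \<omega> \<le> sample_ssq X n \<omega>"
    by (rule sample_ssq_mono[OF size])
  also have "\<dots> \<le> real n * \<sigma>\<^sup>2 * w\<^sup>2"
    using stops_imp_sample_ssq_le[OF _ stop] m_ge_2 n by (simp add: w_def)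
  also have "\<dots> = \<rho> * nstar * w ^ 3 * \<sigma>\<^sup>2"
    by (simp add: n_eq power2_eq_square power3_eq_cube)
  also have "\<dots> \<le> \<rho> * nstar * (1 - block_level l i) ^ 3 * \<sigma>\<^sup>2"
    using i(1) w(1) pos by (intro mult_right_mono mult_left_mono power_mono) auto
  also have "\<dots> = block_ratio l i * real (block_size l i) * \<sigma>\<^sup>2"
    using block_size_pos[OF l level] by (simp add: block_ratio_def)
  finally show ?thesis
    using \<omega> level by (auto simp: undershoot_event_def undershoot_block_def)
qed

lemma early_stop_sq_dev_le:
  assumes early: "real n \<le> \<rho> * nstar / 2" and N: "real n / \<rho> \<le> N" "N < real n / \<rho> + 1"
  shows "(N - nstar)\<^sup>2 / nstar \<le> nstar"
proof -
  have "real n / \<rho> \<le> nstar / 2"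
    using early \<rho>_pos by (simp add: pos_divide_le_eq mult.commute)
  moreover have "0 \<le> real n / \<rho>"
    using \<rho>_pos by simp
  ultimately have "N \<le> nstar" "0 \<le> N"
    using N nstar_ge_2 by linarith+
  then have "(N - nstar)\<^sup>2 \<le> nstar\<^sup>2"
    by (intro power2_le_iff_abs_le[THEN iffD2]) auto
  then show ?thesis
    using nstar_pos by (simp add: divide_le_eq power2_eq_square)
qed

lemma stopped_size_facts:
  assumes "\<exists>t. stops (m + k * t) \<omega>"
  defines "n \<equiv> m + k * stopT X m k \<rho> A c \<omega>" and "N \<equiv> real_of_int (sampleN X m k \<rho> A c \<omega>)"
  shows "stops n \<omega>" and "real n / \<rho> \<le> N" and "N < real n / \<rho> + 1"
proof -
  show "stops n \<omega>"
    using LeastI_ex[OF assms(1)] by (simp add: n_def stopT_eq_Least)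
  show "real n / \<rho> \<le> N" "N < real n / \<rho> + 1"
    unfolding N_def sampleN_eq_ceiling n_def[symmetric] by linarith+
qed

lemma late_stop_imp_overshoot_event:
  assumes K: "2 + (4 * real k + 2) / \<rho> \<le> sqrt (real l)" and \<omega>: "\<omega> \<in> space M"
    and late: "\<rho> * (nstar + abs_dev l - 1) < real (m + k * stopT X m k \<rho> A c \<omega>)"
  shows "\<omega> \<in> overshoot_event l"
proof -
  have "\<not> stops (overshoot_size l) \<omega>"
    using not_less_Least[of "overshoot_stage l" "\<lambda>t. stops (m + k * t) \<omega>"] overshoot_stage_less[OF late]
    by (simp add: overshoot_size_def stopT_eq_Least)
  then show ?thesis
    using not_stops_imp_overshoot_event[OF K \<omega>] by blast
qed

lemma loss_ge_cases:
  assumes \<omega>: "\<omega> \<in> space M" and l: "l \<ge> 1" and K: "2 + (4 * real k + 2) / \<rho> \<le> sqrt (real l)"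
    and loss: "real l \<le> loss \<omega>"
  shows "\<omega> \<in> overshoot_event l \<union> undershoot_event l \<or> (\<omega> \<in> small_ssq_event \<and> loss \<omega> \<le> nstar)"
proof (cases "\<exists>t. stops (m + k * t) \<omega>")
  case False
  then show ?thesis
    using not_stops_imp_overshoot_event[OF K \<omega>] by (auto simp: overshoot_size_def)
next
  case True
  define n where "n = m + k * stopT X m k \<rho> A c \<omega>"
  define N where "N = real_of_int (sampleN X m k \<rho> A c \<omega>)"
  note stop = stopped_size_facts(1)[OF True, folded n_def]
  note N = stopped_size_facts(2,3)[OF True, folded n_def N_def]
  have n: "m \<le> n"
    by (simp add: n_def)
  have loss_eq: "loss \<omega> = (N - nstar)\<^sup>2 / nstar"
    using nstar_pos by (simp add: loss_def N_def)
  have "abs_dev l \<le> \<bar>N - nstar\<bar>"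
    using loss by (simp add: loss_eq abs_dev_le_iff)
  then have "nstar + abs_dev l \<le> N \<or> N \<le> nstar - abs_dev l"
    by (cases "nstar \<le> N") auto
  then consider (early) "real n \<le> \<rho> * nstar / 2" | (late) "nstar + abs_dev l \<le> N"
    | (short) "\<rho> * nstar / 2 < real n" "N \<le> nstar - abs_dev l"
    by (cases "real n \<le> \<rho> * nstar / 2") auto
  then show ?thesis
  proof cases
    case early
    then show ?thesis
      using early_stop_imp_small_ssq_event[OF \<omega> stop n early] early_stop_sq_dev_le[OF early N]
      by (simp add: loss_eq)
  next
    case late
    then have "nstar + abs_dev l - 1 < real n / \<rho>"
      using N(2) by linarith
    then show ?thesis
      using late_stop_imp_overshoot_event[OF K \<omega>] \<rho>_pos
      by (simp add: n_def pos_less_divide_eq mult.commute)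
  next
    case short
    then have "real n / \<rho> \<le> nstar - abs_dev l"
      using N(1) by linarith
    then show ?thesis
      using early_stop_imp_undershoot_event[OF \<omega> l stop n short(1)] \<rho>_pos
      by (simp add: pos_divide_le_eq mult.commute)
  qed
qed

lemma loss_tail_le:
  assumes \<omega>: "\<omega> \<in> space M" and L: "1 \<le> L" and K: "2 + (4 * real k + 2) / \<rho> \<le> sqrt (real L)"
  shows "ennreal (loss \<omega> * indicator {\<omega>. real L < loss \<omega>} \<omega>)
    \<le> ennreal nstar * indicator small_ssq_event \<omega>
      + (\<Sum>i. ennreal (real (i + L) + 1) * indicator (overshoot_event (i + L) \<union> undershoot_event (i + L)) \<omega>)"
    (is "_ \<le> ?small + suminf ?E")
proof (cases "real L < loss \<omega>")
  case False
  then show ?thesis by simp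
next
  case True
  define l where "l = nat \<lfloor>loss \<omega>\<rfloor>"
  have "real l = of_int \<lfloor>loss \<omega>\<rfloor>"
    by (simp add: l_def loss_def)
  then have l: "real l \<le> loss \<omega>" "loss \<omega> < real l + 1"
    by linarith+
  have "L \<le> l"
    using True by (simp add: l_def le_nat_floor less_imp_le)
  then have Kl: "2 + (4 * real k + 2) / \<rho> \<le> sqrt (real l)"
    using K by (meson order.trans of_nat_mono real_sqrt_le_mono)
  from loss_ge_cases[OF \<omega> _ Kl l(1)] \<open>L \<le> l\<close> L
  consider "\<omega> \<in> overshoot_event l \<union> undershoot_event l" | "\<omega> \<in> small_ssq_event" "loss \<omega> \<le> nstar"
    by force
  then show ?thesis
  proof cases
    case 1
    have "ennreal (loss \<omega>) \<le> ennreal (real l + 1)"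
      using l(2) by (intro ennreal_leI) simp
    also have "\<dots> = ?E (l - L)"
      using 1 \<open>L \<le> l\<close> by simp
    also have "\<dots> \<le> sum ?E {..<Suc (l - L)}"
      by (rule member_le_sum) auto
    also have "\<dots> \<le> suminf ?E"
      by (rule sum_le_suminf[OF summableI]) auto
    also have "\<dots> \<le> ?small + suminf ?E"
      by simp
    finally show ?thesis
      using True by simp
  next
    case 2
    then show ?thesis
      using True by (simp add: ennreal_leI add_increasing2)
  qed
qed

lemma nn_integral_loss_tail_le:
  assumes L: "1 \<le> L" and K: "2 + (4 * real k + 2) / \<rho> \<le> sqrt (real L)"
  shows "(\<integral>\<^sup>+\<omega>. ennreal (loss \<omega> * indicator {\<omega>. real L < loss \<omega>} \<omega>) \<partial>M)
    \<le> ennreal (nstar * small_ssq_prob_bound m + (\<Sum>i. (real (i + L) + 1) * tail_bound \<rho> (i + L)))"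
proof -
  let ?E = "\<lambda>i. overshoot_event (i + L) \<union> undershoot_event (i + L)"
  have Ki: "2 + (4 * real k + 2) / \<rho> \<le> sqrt (real (i + L))" for i
    using K by (meson order.trans of_nat_mono real_sqrt_le_mono le_add2)
  have summable: "summable (\<lambda>i. (real (i + L) + 1) * tail_bound \<rho> (i + L))"
    using summable_ignore_initial_segment[OF summable_tail_bound[OF \<rho>_pos], of L] by simp
  have "(\<integral>\<^sup>+\<omega>. ennreal (loss \<omega> * indicator {\<omega>. real L < loss \<omega>} \<omega>) \<partial>M)
      \<le> (\<integral>\<^sup>+\<omega>. ennreal nstar * indicator small_ssq_event \<omega>
          + (\<Sum>i. ennreal (real (i + L) + 1) * indicator (?E i) \<omega>) \<partial>M)"
    by (intro nn_integral_mono loss_tail_le[OF _ L K])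
  also have "\<dots> = ennreal nstar * emeasure M small_ssq_event
      + (\<Sum>i. ennreal (real (i + L) + 1) * emeasure M (?E i))"
    by (simp add: nn_integral_add nn_integral_suminf nn_integral_cmult_indicator)
  also have "\<dots> \<le> ennreal nstar * ennreal (small_ssq_prob_bound m)
      + (\<Sum>i. ennreal ((real (i + L) + 1) * tail_bound \<rho> (i + L)))"
  proof (intro add_mono mult_left_mono suminf_le)
    show "ennreal (real (i + L) + 1) * emeasure M (?E i) \<le> ennreal ((real (i + L) + 1) * tail_bound \<rho> (i + L))" for i
      using emeasure_overshoot_undershoot_le[OF _ Ki[of i]] L
      by (simp add: ennreal_mult' mult_left_mono)
  qed (auto intro: summableI emeasure_small_ssq_event_le)
  also have "(\<Sum>i. ennreal ((real (i + L) + 1) * tail_bound \<rho> (i + L)))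
      = ennreal (\<Sum>i. (real (i + L) + 1) * tail_bound \<rho> (i + L))"
    by (rule suminf_ennreal2) (use summable tail_bound_nonneg[OF \<rho>_pos] in auto)
  also have "ennreal nstar * ennreal (small_ssq_prob_bound m) + ennreal (\<Sum>i. (real (i + L) + 1) * tail_bound \<rho> (i + L))
      = ennreal (nstar * small_ssq_prob_bound m + (\<Sum>i. (real (i + L) + 1) * tail_bound \<rho> (i + L)))"
  proof -
    have "0 \<le> small_ssq_prob_bound m"
      by (simp add: small_ssq_prob_bound_def)
    moreover have "0 \<le> (\<Sum>i. (real (i + L) + 1) * tail_bound \<rho> (i + L))"
      using summable tail_bound_nonneg[OF \<rho>_pos] by (intro suminf_nonneg) auto
    ultimately show ?thesis
      using nstar_pos by (simp add: ennreal_mult del: of_nat_add)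
  qed
  finally show ?thesis .
qed

end

lemma sampleN_tail_integral_le:
  assumes "iid_normal M X \<mu> \<sigma>" and "A > 0" "k \<ge> 1" "m \<ge> 2" "\<rho> > 0" "c > 0"
    and "2 \<le> \<sigma> * sqrt (A / c)" "real m \<le> \<rho> * (\<sigma> * sqrt (A / c) - 1) - real k"
    and "1 \<le> L" "2 + (4 * real k + 2) / \<rho> \<le> sqrt (real L)"
  shows "(\<integral>\<^sup>+\<omega>. ennreal (\<bar>(real_of_int (sampleN X m k \<rho> A c \<omega>) - \<sigma> * sqrt (A / c))\<^sup>2 / (\<sigma> * sqrt (A / c))\<bar>
      * indicator {\<omega>. real L < \<bar>(real_of_int (sampleN X m k \<rho> A c \<omega>) - \<sigma> * sqrt (A / c))\<^sup>2 / (\<sigma> * sqrt (A / c))\<bar>} \<omega>) \<partial>M)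
    \<le> ennreal (\<sigma> * sqrt (A / c) * small_ssq_prob_bound m + (\<Sum>i. (real (i + L) + 1) * tail_bound \<rho> (i + L)))"
proof -
  interpret stopping_rule M X \<mu> \<sigma> m k \<rho> A c
    using assms by (intro stopping_rule.intro stopping_rule_axioms.intro) simp_all
  show ?thesis
    using nn_integral_loss_tail_le[OF assms(9,10)] by (simp only: loss_def nstar_def)
qed

section \<open>The asymptotic regime\<close>

lemma tail_bound_threshold:
  assumes \<rho>: "\<rho> > 0" and \<epsilon>: "\<epsilon> > 0"
  obtains L :: nat where "1 \<le> L" "b \<le> sqrt (real L)"
    "(\<Sum>i. (real (i + L) + 1) * tail_bound \<rho> (i + L)) < \<epsilon>"
proof -
  obtain N where N: "\<And>n. N \<le> n \<Longrightarrow> norm (\<Sum>i. (real (i + n) + 1) * tail_bound \<rho> (i + n)) < \<epsilon>"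
    using suminf_exist_split[OF \<epsilon> summable_tail_bound[OF \<rho>]] by blast
  define L where "L = max N (max 1 (nat \<lceil>b\<^sup>2\<rceil>))"
  have "b\<^sup>2 \<le> real L"
    unfolding L_def by linarith
  then have "b \<le> sqrt (real L)"
    by (rule real_le_rsqrt)
  moreover have "(\<Sum>i. (real (i + L) + 1) * tail_bound \<rho> (i + L)) < \<epsilon>"
    using N[of L] by (simp add: L_def abs_less_iff)
  moreover have "1 \<le> L"
    by (simp add: L_def le_max_iff_disj)
  ultimately show ?thesis
    by (intro that)
qed

lemma powr_bigo_nstar:
  fixes x c :: "nat \<Rightarrow> real"
  assumes \<sigma>: "\<sigma> > 0" and A: "A > 0" and c_pos: "\<And>j. c j > 0" and x_pos: "\<And>j. x j > 0"
    and c_O: "c \<in> O(\<lambda>j. x j powr (- 2 * r))"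
  shows "(\<lambda>j. x j powr r) \<in> O(\<lambda>j. \<sigma> * sqrt (A / c j))"
proof -
  obtain C where C: "C > 0" "eventually (\<lambda>j. norm (c j) \<le> C * norm (x j powr (- 2 * r))) sequentially"
    using c_O by (elim landau_o.bigE)
  show ?thesis
  proof (rule landau_o.bigI)
    show "0 < 1 / (\<sigma> * sqrt (A / C))"
      using \<sigma> A C(1) by simp
    show "eventually (\<lambda>j. norm (x j powr r) \<le> 1 / (\<sigma> * sqrt (A / C)) * norm (\<sigma> * sqrt (A / c j))) sequentially"
      using C(2)
    proof eventually_elim
      case (elim j)
      have pos: "0 < \<sigma> * sqrt (A / C)"
        using \<sigma> A C(1) by simp
      have "A / (C * x j powr (- 2 * r)) \<le> A / c j"
        using elim c_pos[of j] x_pos[of j] A C(1) by (intro divide_left_mono) auto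
      moreover have "A / (C * x j powr (- 2 * r)) = (A / C) * (x j powr r)\<^sup>2"
        using x_pos[of j] by (simp add: powr_minus divide_simps powr_powr[symmetric] powr_realpow[symmetric]
            powr_mult_base power2_eq_square powr_add[symmetric])
      ultimately have "sqrt ((A / C) * (x j powr r)\<^sup>2) \<le> sqrt (A / c j)"
        by (metis real_sqrt_le_mono)
      also have "sqrt ((A / C) * (x j powr r)\<^sup>2) = sqrt (A / C) * x j powr r"
        by (simp only: real_sqrt_mult) simp
      finally have le: "\<sigma> * sqrt (A / C) * x j powr r \<le> \<sigma> * sqrt (A / c j)"
        using \<sigma> by (simp add: mult.assoc)
      have "x j powr r = 1 / (\<sigma> * sqrt (A / C)) * (\<sigma> * sqrt (A / C) * x j powr r)"
        using \<sigma> A C(1) by simp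
      also have "\<dots> \<le> 1 / (\<sigma> * sqrt (A / C)) * (\<sigma> * sqrt (A / c j))"
        using le pos by (intro mult_left_mono) simp_all
      finally show ?case
        using \<sigma> A c_pos[of j] by (simp add: abs_mult)
    qed
  qed
qed

lemma eventually_nstar_large:
  fixes x \<nu> :: "nat \<Rightarrow> real"
  assumes r: "r > 1" and \<rho>: "\<rho> > 0" and \<nu>_pos: "\<And>j. 0 < \<nu> j"
    and x: "filterlim x at_top sequentially" and lower: "(\<lambda>j. x j powr r) \<in> O(\<nu>)"
  shows "eventually (\<lambda>j. 2 \<le> \<nu> j \<and> x j \<le> \<rho> * (\<nu> j - 1) - real k) sequentially"
proof -
  obtain D where D: "D > 0" "eventually (\<lambda>j. norm (x j powr r) \<le> D * norm (\<nu> j)) sequentially"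
    using lower by (elim landau_o.bigE)
  have "eventually (\<lambda>y. (y + real k) / \<rho> + 2 \<le> y powr r / D) at_top"
    using r \<rho> D(1) by real_asymp
  then have "eventually (\<lambda>y. 0 \<le> y \<and> (y + real k) / \<rho> + 2 \<le> y powr r / D) at_top"
    by (intro eventually_conj eventually_ge_at_top)
  from D(2) eventually_compose_filterlim[OF this x] show ?thesis
  proof eventually_elim
    case (elim j)
    have "x j powr r / D \<le> \<nu> j"
      using elim(1) \<nu>_pos[of j] D(1) by (simp add: field_simps)
    then have large: "(x j + real k) / \<rho> + 2 \<le> \<nu> j"
      using elim(2) by linarith
    have "0 \<le> (x j + real k) / \<rho>"
      using elim(2) \<rho> by simp
    moreover have "\<rho> * ((x j + real k) / \<rho> + 2) \<le> \<rho> * \<nu> j"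
      using large \<rho> by (intro mult_left_mono) auto
    moreover have "\<rho> * ((x j + real k) / \<rho> + 2) = x j + real k + 2 * \<rho>"
      using \<rho> by (simp add: field_simps)
    ultimately show ?case
      using large \<rho> by (simp add: right_diff_distrib)
  qed
qed

lemma eventually_small_ssq_prob_bound_less:
  fixes x \<nu> :: "nat \<Rightarrow> real"
  assumes \<epsilon>: "\<epsilon> > 0" and x: "filterlim x at_top sequentially" and upper: "\<nu> \<in> O(\<lambda>j. x j powr r)"
  shows "eventually (\<lambda>j. \<nu> j * small_ssq_prob_bound (x j) < \<epsilon>) sequentially"
proof -
  obtain C where C: "C > 0" "eventually (\<lambda>j. norm (\<nu> j) \<le> C * norm (x j powr r)) sequentially"
    using upper by (elim landau_o.bigE)
  define B where "B = 3 / (1 - exp (- (1/32::real)))"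
  have B: "B > 0" by (simp add: B_def)
  have "((\<lambda>y. C * B * (y powr r * exp (- (y / 32)))) \<longlongrightarrow> C * B * 0) at_top"
    by (intro tendsto_mult_left) real_asymp
  then have "eventually (\<lambda>y. C * B * (y powr r * exp (- (y / 32))) < \<epsilon>) at_top"
    using \<epsilon> by (simp add: order_tendstoD(2))
  from C(2) eventually_compose_filterlim[OF this x] show ?thesis
  proof eventually_elim
    case (elim j)
    have "\<nu> j \<le> C * x j powr r"
      using elim(1) by simp
    then have "\<nu> j * small_ssq_prob_bound (x j) \<le> C * B * (x j powr r * exp (- (x j / 32)))"
      using mult_right_mono[of "\<nu> j" "C * x j powr r" "B * exp (- (x j / 32))"] B
      by (simp add: small_ssq_prob_bound_def B_def mult_ac)
    then show ?case
      using elim(2) by linarith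
  qed
qed

lemma filterlim_pilot_size:
  assumes "k \<ge> 1" and "filterlim m0 at_top sequentially"
  shows "filterlim (\<lambda>j. real (m0 j * k + 1)) at_top sequentially"
proof (rule filterlim_at_top_mono[OF filterlim_compose[OF filterlim_real_sequentially assms(2)]])
  show "eventually (\<lambda>j. real (m0 j) \<le> real (m0 j * k + 1)) sequentially"
    by (intro always_eventually allI of_nat_mono) (metis assms(1) mult.right_neutral mult_le_mono2 trans_le_add1)
qed

theorem lemma5p3:
  fixes M :: "'a measure" and X :: "nat \<Rightarrow> 'a \<Rightarrow> real"
    and \<mu> \<sigma> A \<rho> r :: real and k :: nat
    and m0 :: "nat \<Rightarrow> nat" and c :: "nat \<Rightarrow> real"
  assumes P: "prob_space M"
    and indep: "prob_space.indep_vars M (\<lambda>_. borel) X UNIV"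
    and normal: "\<And>i. distributed M lborel (X i) (normal_density \<mu> \<sigma>)"
    and \<sigma>_pos: "\<sigma> > 0" and A_pos: "A > 0"
    and k_pos: "k \<ge> 1" and \<rho>_pos: "0 < \<rho>" and \<rho>_le: "\<rho> \<le> 1"
    and r_gt: "r > 1"
    and m0_pos: "\<And>j. m0 j \<ge> 1"
    and c_pos: "\<And>j. c j > 0"
    and m0_lim: "filterlim m0 at_top sequentially"
    and c_O: "c \<in> O(\<lambda>j. real (m0 j * k + 1) powr (- 2 * r))"
    and nstar_O: "(\<lambda>j. \<sigma> * sqrt (A / c j)) \<in> O(\<lambda>j. real (m0 j * k + 1) powr r)"
    and limsup: "limsup (\<lambda>j. ereal (real (m0 j * k + 1) / (\<sigma> * sqrt (A / c j)))) < ereal \<rho>"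
  shows "\<forall>\<epsilon>>0. \<exists>K J. \<forall>j\<ge>J.
     (\<integral>\<^sup>+ \<omega>. ennreal (\<bar>(real_of_int (sampleN X (m0 j * k + 1) k \<rho> A (c j) \<omega>) - \<sigma> * sqrt (A / c j))\<^sup>2 / (\<sigma> * sqrt (A / c j))\<bar>
          * indicator {\<omega>. \<bar>(real_of_int (sampleN X (m0 j * k + 1) k \<rho> A (c j) \<omega>) - \<sigma> * sqrt (A / c j))\<^sup>2 / (\<sigma> * sqrt (A / c j))\<bar> > K} \<omega>) \<partial>M)
       < ennreal \<epsilon>"
proof -
  define Y where "Y j \<omega> = \<bar>(real_of_int (sampleN X (m0 j * k + 1) k \<rho> A (c j) \<omega>) - \<sigma> * sqrt (A / c j))\<^sup>2 / (\<sigma> * sqrt (A / c j))\<bar>" for j \<omega>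
  have iid: "iid_normal M X \<mu> \<sigma>"
    using P indep normal \<sigma>_pos by (intro iid_normal.intro iid_normal_axioms.intro)
  have m_ge_2: "2 \<le> m0 j * k + 1" for j
    using m0_pos[of j] k_pos by (simp add: Suc_le_eq)
  have m_pos: "0 < real (m0 j * k + 1)" for j
    by (rule of_nat_0_less_iff[THEN iffD2]) simp
  have nstar_pos: "0 < \<sigma> * sqrt (A / c j)" for j
    using \<sigma>_pos A_pos c_pos[of j] by simp
  note m_lim = filterlim_pilot_size[OF k_pos m0_lim]
  have "\<exists>K J. \<forall>j\<ge>J. (\<integral>\<^sup>+\<omega>. ennreal (Y j \<omega> * indicator {\<omega>. K < Y j \<omega>} \<omega>) \<partial>M) < ennreal \<epsilon>"
    if \<epsilon>: "\<epsilon> > 0" for \<epsilon>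
  proof -
    obtain L where L: "1 \<le> L" "2 + (4 * real k + 2) / \<rho> \<le> sqrt (real L)"
      and tail: "(\<Sum>i. (real (i + L) + 1) * tail_bound \<rho> (i + L)) < \<epsilon> / 2"
      using tail_bound_threshold[OF \<rho>_pos, of "\<epsilon> / 2"] \<epsilon> by auto
    have "eventually (\<lambda>j. (\<integral>\<^sup>+\<omega>. ennreal (Y j \<omega> * indicator {\<omega>. real L < Y j \<omega>} \<omega>) \<partial>M) < ennreal \<epsilon>) sequentially"
      using eventually_nstar_large[OF r_gt \<rho>_pos nstar_pos m_lim powr_bigo_nstar[OF \<sigma>_pos A_pos c_pos m_pos c_O], where k = k]
        eventually_small_ssq_prob_bound_less[OF half_gt_zero[OF \<epsilon>] m_lim nstar_O]
    proof eventually_elim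
      case (elim j)
      show ?case
        unfolding Y_def using elim tail \<epsilon>
        by (intro order.strict_trans1[OF sampleN_tail_integral_le[OF iid A_pos k_pos m_ge_2 \<rho>_pos c_pos _ _ L]
              ennreal_lessI]) auto
    qed
    then show ?thesis
      unfolding eventually_sequentially by blast
  qed
  then show ?thesis
    unfolding Y_def by blast
qed

end
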